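(* Let $v\in C(S^1,(0,\infty))$ be separable in $S^1$ and suppose $\max_{S^1}v>\min_{S^1}v$. Then there exist $\alpha_0\in[0,2\pi)$ and $\theta_1,\theta_2\in[0,\pi)$ such that: (i) $\theta_1+\theta_2<\pi$; (ii) $v^{-1}(\max_{S^1}v)=\{(\cos(\alpha_0+\theta),\sin(\alpha_0+\theta)):|\theta|\le\theta_1\}$ and $v^{-1}(\min_{S^1}v)=\{(\cos(\alpha_0+\pi+\theta),\sin(\alpha_0+\pi+\theta)):|\theta|\le\theta_2\}$; (iii) $v(x)=v(l_{\alpha_0}(x))$ for all $x\in S^1_{\alpha_0}$; (iv) the function $\alpha\mapsto v((\cos\alpha,\sin\alpha))$ is not constant and is nonincreasing on $[\alpha_0,\alpha_0+\pi)$.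
   Context: $S^1\subset\mathbb{R}^2$ is the unit circle. For $\alpha\in\mathbb{R}$, $S^1_\alpha=\{(\cos(\alpha+\theta),\sin(\alpha+\theta)):\theta\in(0,\pi)\}$ (an open half-circle), and for $x\in S^1$, $l_\alpha(x)$ denotes the reflection of $x$ across the line through the origin with direction $(\cos\alpha,\sin\alpha)$. A function $v\in C(S^1,\mathbb{R})$ is called separable in $S^1$ if for every $\alpha\in[0,2\pi)$, either $v(l_\alpha(x))\ge v(x)$ for all $x\in S^1_\alpha$, or $v(l_\alpha(x))\le v(x)$ for all $x\in S^1_\alpha$. *)

theory Defs
  imports "HOL-Analysis.Analysis"
begin

definition circ :: "(real \<times> real) set" where
  "circ = {p. (fst p)\<^sup>2 + (snd p)\<^sup>2 = 1}"

definition epoint :: "real \<Rightarrow> real \<times> real" where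
  "epoint t = (cos t, sin t)"

definition half_circ :: "real \<Rightarrow> (real \<times> real) set" where
  "half_circ a = {epoint (a + t) | t. 0 < t \<and> t < pi}"

text \<open>Reflection across the line through 0 with direction (cos a, sin a).\<close>
definition refl_line :: "real \<Rightarrow> real \<times> real \<Rightarrow> real \<times> real" where
  "refl_line a p = (let d = fst p * cos a + snd p * sin a
                    in (2 * d * cos a - fst p, 2 * d * sin a - snd p))"

definition separable :: "(real \<times> real \<Rightarrow> real) \<Rightarrow> bool" where
  "separable v \<longleftrightarrow> (\<forall>a\<in>{0..<2*pi}.
      (\<forall>x\<in>half_circ a. v (refl_line a x) \<ge> v x) \<or>
      (\<forall>x\<in>half_circ a. v (refl_line a x) \<le> v x))"

end

theory Submission
  imports Defs "HOL-Library.Periodic_Fun"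
begin

text \<open>
  Write \<open>f t = v (cos t, sin t)\<close>. Separability says that about every angle \<open>a\<close> the profile \<open>f\<close>
  is either nowhere larger to the right of \<open>a\<close> than at the mirror image, or nowhere smaller.
  Both alternatives define closed sets covering the real line, each nonempty (the second one
  at \<open>a\<close> is the first one at \<open>a + \<pi>\<close>), so by connectedness \<open>f\<close> has an axis of symmetry.
  Two axes at distance \<open>d\<close> make \<open>f\<close> \<open>2d\<close>-periodic, and a period \<open>P \<le> \<pi>\<close> together with
  separability at the midpoint of \<open>u\<close> and \<open>u + P + \<delta>\<close> forces \<open>f (u + \<delta>) = f u\<close>: a nonconstant
  \<open>f\<close> has no two axes less than \<open>\<pi>\<close> apart. The connectedness argument on a half turn
  \<open>[a, a + \<pi>]\<close> starting at an axis then shows that the same alternative holds all along it,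
  i.e. \<open>f\<close> is monotone there, and the extremal sets are level sets of a monotone continuous
  function, hence arcs.
\<close>

text \<open>
  Separability of \<open>v\<close> at angle \<open>a\<close>, read on \<open>f t = v (cos t, sin t)\<close>: the half circle
  \<open>S\<^sup>1\<^sub>a\<close> consists of the points at angle \<open>a + t\<close>, \<open>0 < t < \<pi>\<close>, and \<open>l\<^sub>a\<close> sends them to angle \<open>a - t\<close>.
\<close>

definition right_le_left :: "(real \<Rightarrow> real) \<Rightarrow> real \<Rightarrow> bool" where
  "right_le_left f a \<longleftrightarrow> (\<forall>t. 0 < t \<and> t < pi \<longrightarrow> f (a + t) \<le> f (a - t))"

definition left_le_right :: "(real \<Rightarrow> real) \<Rightarrow> real \<Rightarrow> bool" where
  "left_le_right f a \<longleftrightarrow> (\<forall>t. 0 < t \<and> t < pi \<longrightarrow> f (a - t) \<le> f (a + t))"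

definition symmetric_about :: "(real \<Rightarrow> real) \<Rightarrow> real \<Rightarrow> bool" where
  "symmetric_about f a \<longleftrightarrow> (\<forall>s. f (a - s) = f (a + s))"

lemma right_le_left_translate:
  "right_le_left (\<lambda>x. f (x + s)) a \<longleftrightarrow> right_le_left f (a + s)"
  unfolding right_le_left_def by (simp add: algebra_simps)

lemma left_le_right_translate:
  "left_le_right (\<lambda>x. f (x + s)) a \<longleftrightarrow> left_le_right f (a + s)"
  unfolding left_le_right_def by (simp add: algebra_simps)

lemma symmetric_about_translate:
  "symmetric_about (\<lambda>x. f (x + s)) a \<longleftrightarrow> symmetric_about f (a + s)"
  unfolding symmetric_about_def by (simp add: algebra_simps)

lemma symmetric_about_abs:
  assumes "symmetric_about f a"
  shows "f (a + t) = f (a + \<bar>t\<bar>)"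
  using assms[unfolded symmetric_about_def, rule_format, of "- t"] by (cases "t \<ge> 0") auto

lemma periodic_if_two_symmetry_axes:
  assumes "symmetric_about f a" "symmetric_about f c"
  shows "f (x + 2 * (c - a)) = f x"
proof -
  have "f (x + 2 * (c - a)) = f (c + (x + c - 2 * a))" by (simp add: algebra_simps)
  also have "\<dots> = f (c - (x + c - 2 * a))" using assms(2) unfolding symmetric_about_def by metis
  also have "\<dots> = f (a + (a - x))" by (simp add: algebra_simps)
  also have "\<dots> = f (a - (a - x))" using assms(1) unfolding symmetric_about_def by metis
  finally show ?thesis by simp
qed

lemma shift_into_interval:
  fixes p x c :: real
  assumes "p > 0"
  obtains k :: int where "x - of_int k * p \<in> {c..<c + p}"
proof
  define k where "k = \<lfloor>(x - c) / p\<rfloor>"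
  have "of_int k \<le> (x - c) / p" "(x - c) / p < of_int k + 1"
    unfolding k_def by linarith+
  with assms show "x - of_int k * p \<in> {c..<c + p}"
    by (simp add: field_simps)
qed

lemma left_le_right_iff_right_le_left_opposite:
  assumes "periodic_fun_simple f (2 * pi)"
  shows "left_le_right f a \<longleftrightarrow> right_le_left f (a + pi)"
proof -
  interpret periodic_fun_simple f "2 * pi" by fact
  show ?thesis
    unfolding left_le_right_def right_le_left_def
  proof (intro iffI allI impI)
    fix t assume L: "\<forall>t. 0 < t \<and> t < pi \<longrightarrow> f (a - t) \<le> f (a + t)" and t: "0 < t \<and> t < pi"
    have "f (a + pi + t) = f (a - (pi - t))"
      using plus_period[of "a - (pi - t)"] by (simp add: algebra_simps)
    also have "\<dots> \<le> f (a + (pi - t))" using L t by simp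
    also have "a + (pi - t) = a + pi - t" by simp
    finally show "f (a + pi + t) \<le> f (a + pi - t)" .
  next
    fix t assume R: "\<forall>t. 0 < t \<and> t < pi \<longrightarrow> f (a + pi + t) \<le> f (a + pi - t)" and t: "0 < t \<and> t < pi"
    have "f (a - t) = f (a + pi + (pi - t))"
      using plus_period[of "a - t"] by (simp add: algebra_simps)
    also have "\<dots> \<le> f (a + pi - (pi - t))" using R[rule_format, of "pi - t"] t by simp
    also have "a + pi - (pi - t) = a + t" by simp
    finally show "f (a - t) \<le> f (a + t)" .
  qed
qed

lemma symmetric_about_iff:
  assumes "periodic_fun_simple f (2 * pi)"
  shows "symmetric_about f c \<longleftrightarrow> right_le_left f c \<and> left_le_right f c"
proof
  assume "symmetric_about f c"
  then show "right_le_left f c \<and> left_le_right f c"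
    unfolding symmetric_about_def right_le_left_def left_le_right_def by simp
next
  interpret periodic_fun_simple f "2 * pi" by fact
  assume both: "right_le_left f c \<and> left_le_right f c"
  have small: "f (c - s) = f (c + s)" if "\<bar>s\<bar> \<le> pi" for s
  proof -
    consider "s = 0" | "s = pi \<or> s = - pi" | "0 < \<bar>s\<bar> \<and> \<bar>s\<bar> < pi"
      using \<open>\<bar>s\<bar> \<le> pi\<close> by linarith
    then show ?thesis
    proof cases
      case 2
      then show ?thesis
        using plus_period[of "c - pi"] by (auto simp: algebra_simps)
    next
      case 3
      then have "f (c + \<bar>s\<bar>) = f (c - \<bar>s\<bar>)"
        using both unfolding right_le_left_def left_le_right_def by (meson order_antisym)
      then show ?thesis by (cases "s \<ge> 0") auto
    qed simp
  qed
  show "symmetric_about f c"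
    unfolding symmetric_about_def
  proof
    fix s
    obtain k :: int where k: "s - of_int k * (2 * pi) \<in> {-pi..<-pi + 2 * pi}"
      using shift_into_interval[of "2 * pi" s "- pi"] by auto
    define r where "r = s - of_int k * (2 * pi)"
    have "f (c - s) = f (c - r - of_int k * (2 * pi))"
      by (simp add: r_def algebra_simps)
    also have "\<dots> = f (c - r)" by (rule minus_of_int)
    also have "\<dots> = f (c + r)" using k by (intro small) (auto simp: r_def)
    also have "\<dots> = f (c + s)"
      using plus_of_int[of "c + r" k] by (simp add: r_def algebra_simps)
    finally show "f (c - s) = f (c + s)" .
  qed
qed

lemma symmetric_about_opposite:
  assumes "periodic_fun_simple f (2 * pi)" "symmetric_about f a"
  shows "symmetric_about f (a + pi)"
proof -
  interpret periodic_fun_simple f "2 * pi" by fact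
  have "f (a + pi - s) = f (a + pi + s)" for s
  proof -
    have "f (a + pi - s) = f (a - (s - pi))" by (simp add: algebra_simps)
    also have "\<dots> = f (a + (s - pi))" using assms(2) unfolding symmetric_about_def by blast
    also have "\<dots> = f (a + pi + s)" using plus_period[of "a + (s - pi)"] by (simp add: algebra_simps)
    finally show ?thesis .
  qed
  then show ?thesis unfolding symmetric_about_def by blast
qed

lemma constant_if_invariant_under_small_shifts:
  fixes f :: "real \<Rightarrow> 'a"
  assumes "P > 0" and shift: "\<And>u \<delta>. 0 < \<delta> \<Longrightarrow> \<delta> < P \<Longrightarrow> f (u + \<delta>) = f u"
  shows "f x = f y"
proof -
  have "f x = f y" if "x \<le> y" for x y
  proof -
    define n where "n = nat \<lceil>(y - x) / P\<rceil> + 1"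
    define e where "e = (y - x) / real n"
    have n: "real n > 0" "(y - x) / P < real n" unfolding n_def by linarith+
    have "0 \<le> e" "e < P"
      using n \<open>x \<le> y\<close> \<open>P > 0\<close> by (auto simp: e_def field_simps)
    then have steps: "f (x + real k * e) = f x" for k
    proof (induction k)
      case (Suc k)
      then show ?case
        using shift[of e "x + real k * e"] by (cases "e = 0") (auto simp: algebra_simps)
    qed simp
    show ?thesis using steps[of n] n by (simp add: e_def)
  qed
  then show ?thesis by (metis linorder_le_cases)
qed

lemma closed_right_le_left:
  assumes "continuous_on UNIV f"
  shows "closed {a. right_le_left f a}"
proof -
  have "{a. right_le_left f a} = (\<Inter>t\<in>{0<..<pi}. {a. f (a + t) \<le> f (a - t)})"
    unfolding right_le_left_def by auto
  also have "closed \<dots>"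
    by (intro closed_INT ballI closed_Collect_le continuous_on_compose2[OF assms] continuous_intros) auto
  finally show ?thesis .
qed

lemma closed_left_le_right:
  assumes "continuous_on UNIV f"
  shows "closed {a. left_le_right f a}"
proof -
  have "{a. left_le_right f a} = (\<Inter>t\<in>{0<..<pi}. {a. f (a - t) \<le> f (a + t)})"
    unfolding left_le_right_def by auto
  also have "closed \<dots>"
    by (intro closed_INT ballI closed_Collect_le continuous_on_compose2[OF assms] continuous_intros) auto
  finally show ?thesis .
qed

lemma antimono_on_if_right_le_left:
  assumes "b - a < 2 * pi" and right: "\<forall>\<alpha>\<in>{a..b}. right_le_left f \<alpha>"
  shows "antimono_on {a..b} f"
proof (rule monotone_onI)
  fix x y assume xy: "x \<in> {a..b}" "y \<in> {a..b}" "x \<le> y"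
  show "f y \<le> f x"
  proof (cases "x = y")
    case False
    have "right_le_left f ((x + y) / 2)" using right xy by auto
    moreover have "0 < (y - x) / 2" "(y - x) / 2 < pi" using xy False assms(1) by auto
    ultimately have "f ((x + y) / 2 + (y - x) / 2) \<le> f ((x + y) / 2 - (y - x) / 2)"
      unfolding right_le_left_def by blast
    moreover have "(x + y) / 2 + (y - x) / 2 = y" "(x + y) / 2 - (y - x) / 2 = x"
      by (simp_all add: field_simps)
    ultimately show ?thesis by simp
  qed simp
qed

lemma antimono_level_set_is_interval:
  fixes g :: "real \<Rightarrow> real"
  assumes cont: "continuous_on {a..b} g" and anti: "antimono_on {a..b} g"
  obtains l u where "{s \<in> {a..b}. g s = c} = {l..u}"
proof -
  let ?L = "{s \<in> {a..b}. g s = c}"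
  have "closed ?L"
    using continuous_closed_preimage_constant[OF cont closed_atLeastAtMost] .
  then have "compact ({a..b} \<inter> ?L)" by (intro compact_Int_closed compact_Icc)
  moreover have "{a..b} \<inter> ?L = ?L" by auto
  ultimately have "compact ?L" by simp
  moreover have "is_interval ?L"
    unfolding is_interval_1
  proof (intro ballI allI impI)
    fix s1 s2 x assume s: "s1 \<in> ?L" "s2 \<in> ?L" and x: "s1 \<le> x \<and> x \<le> s2"
    then have "x \<in> {a..b}" by auto
    with s x have "g s2 \<le> g x" "g x \<le> g s1"
      using monotone_onD[OF anti, of s1 x] monotone_onD[OF anti, of x s2] by auto
    with s \<open>x \<in> {a..b}\<close> show "x \<in> ?L" by auto
  qed
  ultimately show ?thesis
    using connected_compact_interval_1 is_interval_connected_1 that by blast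
qed

lemma antimono_extremal_level_sets:
  fixes g :: "real \<Rightarrow> real"
  assumes "a \<le> b" and cont: "continuous_on {a..b} g" and anti: "antimono_on {a..b} g"
    and "g b < g a"
  obtains u l where "a \<le> u" "u < l" "l \<le> b"
    "{s \<in> {a..b}. g s = g a} = {a..u}" "{s \<in> {a..b}. g s = g b} = {l..b}"
proof -
  obtain l1 u where top: "{s \<in> {a..b}. g s = g a} = {l1..u}"
    using antimono_level_set_is_interval[OF cont anti] .
  obtain l u2 where bot: "{s \<in> {a..b}. g s = g b} = {l..u2}"
    using antimono_level_set_is_interval[OF cont anti] .
  have mem_top: "s \<in> {a..b} \<and> g s = g a \<longleftrightarrow> s \<in> {l1..u}" for s
    using top by blast
  have mem_bot: "s \<in> {a..b} \<and> g s = g b \<longleftrightarrow> s \<in> {l..u2}" for s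
    using bot by blast
  have "l1 = a" "a \<le> u" "u2 = b" "l \<le> b"
    using mem_top[of a] mem_top[of l1] mem_bot[of b] mem_bot[of u2] \<open>a \<le> b\<close> by auto
  moreover have "u < l"
  proof (rule ccontr)
    assume "\<not> u < l"
    have "u \<in> {l1..u}" "l \<in> {l..u2}" using calculation by auto
    then have "u \<in> {a..b}" "l \<in> {a..b}" "g u = g a" "g l = g b"
      unfolding top[symmetric] bot[symmetric] by auto
    then have "g u \<le> g l" using monotone_onD[OF anti, of l u] \<open>\<not> u < l\<close> by auto
    with \<open>g u = g a\<close> \<open>g l = g b\<close> \<open>g b < g a\<close> show False by simp
  qed
  ultimately show ?thesis using that top bot by blast
qed

locale separable_periodic = periodic_fun_simple f "2 * pi" for f :: "real \<Rightarrow> real" +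
  assumes separable_at: "right_le_left f a \<or> left_le_right f a"
begin

lemma periodic: "periodic_fun_simple f (2 * pi)"
  by (fact periodic_fun_simple_axioms)

lemma invariant_under_shifts_below_period:
  assumes "P \<le> pi" and period: "\<And>x. f (x + P) = f x" and "0 < \<delta>" "\<delta> < P"
  shows "f (u + \<delta>) = f u"
proof -
  define \<alpha> t1 t2 where "\<alpha> = u + (P + \<delta>) / 2" and "t1 = (P + \<delta>) / 2" and "t2 = (P - \<delta>) / 2"
  have t: "0 < t1" "t1 < pi" "0 < t2" "t2 < pi"
    using assms by (auto simp: t1_def t2_def)
  \<comment> \<open>Modulo the period, both mirror pairs about \<alpha> are \<open>{u, u + \<delta>}\<close>, in opposite order.\<close>
  have "\<alpha> + t1 = (u + \<delta>) + P" "\<alpha> - t1 = u" "\<alpha> + t2 = u + P" "\<alpha> - t2 = u + \<delta>"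
    by (simp_all add: \<alpha>_def t1_def t2_def field_simps)
  then have pairs: "f (\<alpha> + t1) = f (u + \<delta>)" "f (\<alpha> - t1) = f u"
      "f (\<alpha> + t2) = f u" "f (\<alpha> - t2) = f (u + \<delta>)"
    by (simp_all only: period)
  from separable_at[of \<alpha>] t
  have "f (\<alpha> + t1) \<le> f (\<alpha> - t1) \<and> f (\<alpha> + t2) \<le> f (\<alpha> - t2) \<or>
        f (\<alpha> - t1) \<le> f (\<alpha> + t1) \<and> f (\<alpha> - t2) \<le> f (\<alpha> + t2)"
    unfolding right_le_left_def left_le_right_def by blast
  then show ?thesis unfolding pairs by linarith
qed

lemma constant_if_close_symmetry_axes:
  assumes "symmetric_about f a" "symmetric_about f c" "0 < c - a" "c - a < pi"
  shows "f x = f y"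
proof -
  have double: "f (x + 2 * (c - a)) = f x" for x
    using periodic_if_two_symmetry_axes[OF assms(1,2)] .
  obtain P where P: "0 < P" "P \<le> pi" "\<And>x. f (x + P) = f x"
  proof (cases "c - a \<le> pi / 2")
    case True
    then show ?thesis using that[of "2 * (c - a)"] double assms(3) by auto
  next
    case False
    have "f (x + (2 * pi - 2 * (c - a))) = f x" for x
    proof -
      have "f (x + (2 * pi - 2 * (c - a))) = f (x - 2 * (c - a))"
        using plus_period[of "x - 2 * (c - a)"] by (simp add: algebra_simps)
      also have "\<dots> = f x" using double[of "x - 2 * (c - a)"] by simp
      finally show ?thesis .
    qed
    then show ?thesis using that[of "2 * pi - 2 * (c - a)"] False assms(4) by auto
  qed
  show ?thesis
    using constant_if_invariant_under_small_shifts[OF P(1), of f]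
      invariant_under_shifts_below_period[OF P(2,3)] by blast
qed

lemma symmetry_axis_between:
  assumes cont: "continuous_on UNIV f" and "connected S" "\<alpha> \<in> S" "\<beta> \<in> S"
    and "\<not> right_le_left f \<alpha>" "\<not> left_le_right f \<beta>"
  obtains c where "c \<in> S" "symmetric_about f c"
proof -
  have "\<exists>c\<in>S. right_le_left f c \<and> left_le_right f c"
    using assms(2-6) closed_right_le_left[OF cont] closed_left_le_right[OF cont] separable_at
    unfolding connected_closed by blast
  then show ?thesis using symmetric_about_iff[OF periodic] that by blast
qed

lemma symmetry_axis_exists:
  assumes "continuous_on UNIV f"
  obtains c where "symmetric_about f c"
proof (cases "\<exists>\<alpha> \<beta>. \<not> right_le_left f \<alpha> \<and> \<not> left_le_right f \<beta>")
  case True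
  then show ?thesis using symmetry_axis_between[OF assms connected_UNIV] that by blast
next
  case False
  then have "right_le_left f 0 \<and> left_le_right f 0"
    using left_le_right_iff_right_le_left_opposite[OF periodic, of 0]
      left_le_right_iff_right_le_left_opposite[OF periodic, of "- pi"] separable_at
    by auto
  then show ?thesis using symmetric_about_iff[OF periodic] that by blast
qed

lemma one_sided_on_half_turn:
  assumes cont: "continuous_on UNIV f" and axis: "symmetric_about f a" and "f x \<noteq> f y"
  shows "(\<forall>\<alpha>\<in>{a..a + pi}. right_le_left f \<alpha>) \<or> (\<forall>\<alpha>\<in>{a..a + pi}. left_le_right f \<alpha>)"
proof (rule ccontr)
  assume "\<not> ?thesis"
  then obtain \<alpha> \<beta> where \<alpha>: "\<alpha> \<in> {a..a + pi}" "\<not> right_le_left f \<alpha>"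
    and \<beta>: "\<beta> \<in> {a..a + pi}" "\<not> left_le_right f \<beta>"
    by blast
  have "symmetric_about f (a + pi)" by (rule symmetric_about_opposite[OF periodic axis])
  then have inner: "\<alpha> \<in> {a<..<a + pi}" "\<beta> \<in> {a<..<a + pi}"
    using \<alpha> \<beta> axis symmetric_about_iff[OF periodic] by (auto simp: less_le)
  obtain c where c: "c \<in> {min \<alpha> \<beta>..max \<alpha> \<beta>}" "symmetric_about f c"
    using symmetry_axis_between[OF cont, of "{min \<alpha> \<beta>..max \<alpha> \<beta>}" \<alpha> \<beta>] \<alpha> \<beta> by auto
  then have "0 < c - a" "c - a < pi" using inner by auto
  then have "f x = f y" using constant_if_close_symmetry_axes[OF axis c(2)] by blast
  with assms(3) show False ..
qed

lemma normalized_decreasing_axis: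
  assumes cont: "continuous_on UNIV f" and "f x \<noteq> f y"
  obtains a where "a \<in> {0..<2 * pi}" "symmetric_about f a" "\<forall>\<alpha>\<in>{a..a + pi}. right_le_left f \<alpha>"
proof -
  obtain c where c: "symmetric_about f c" using symmetry_axis_exists[OF cont] .
  obtain a1 where a1: "symmetric_about f a1" "\<forall>\<alpha>\<in>{a1..a1 + pi}. right_le_left f \<alpha>"
  proof (cases "\<forall>\<alpha>\<in>{c..c + pi}. right_le_left f \<alpha>")
    case True
    then show ?thesis using that c by blast
  next
    case False
    then have left: "\<forall>\<alpha>\<in>{c..c + pi}. left_le_right f \<alpha>"
      using one_sided_on_half_turn[OF cont c assms(2)] by blast
    have "right_le_left f \<alpha>" if "\<alpha> \<in> {c + pi..c + pi + pi}" for \<alpha>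
      using left left_le_right_iff_right_le_left_opposite[OF periodic, of "\<alpha> - pi"] that by auto
    then show ?thesis using that symmetric_about_opposite[OF periodic c] by blast
  qed
  obtain k :: int where k: "a1 - of_int k * (2 * pi) \<in> {0..<0 + 2 * pi}"
    using shift_into_interval[of "2 * pi" a1 0] by auto
  define a where "a = a1 - of_int k * (2 * pi)"
  have shift: "(\<lambda>x. f (x + of_int k * (2 * pi))) = f" by (rule ext) (rule plus_of_int)
  have "symmetric_about f a"
    using a1(1) symmetric_about_translate[of f "of_int k * (2 * pi)" a] by (simp add: shift a_def)
  moreover have "\<forall>\<alpha>\<in>{a..a + pi}. right_le_left f \<alpha>"
  proof
    fix \<alpha> assume "\<alpha> \<in> {a..a + pi}"
    then show "right_le_left f \<alpha>"
      using a1(2) right_le_left_translate[of f "of_int k * (2 * pi)" \<alpha>] by (simp add: shift a_def)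
  qed
  moreover have "a \<in> {0..<2 * pi}" using k by (simp add: a_def)
  ultimately show ?thesis using that by blast
qed

end

lemma epoint_in_circ: "epoint t \<in> circ"
  by (simp add: circ_def epoint_def)

lemma epoint_periodic: "periodic_fun_simple epoint (2 * pi)"
  by unfold_locales (simp add: epoint_def)

lemma continuous_on_circle_profile:
  assumes "continuous_on circ v"
  shows "continuous_on UNIV (\<lambda>t. v (epoint t))"
proof (rule continuous_on_compose2[OF assms])
  show "continuous_on UNIV epoint" unfolding epoint_def by (intro continuous_intros)
qed (auto simp: epoint_in_circ)

lemma circ_epoint_near:
  assumes "x \<in> circ"
  obtains t where "\<bar>t\<bar> \<le> pi" "x = epoint (a + t)"
proof -
  interpret periodic_fun_simple epoint "2 * pi" by (fact epoint_periodic)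
  obtain p q where x: "x = (p, q)" by (cases x)
  with assms have "p\<^sup>2 + q\<^sup>2 = 1" by (simp add: circ_def)
  then obtain s where "p = cos s" "q = sin s" by (rule sincos_total_2pi)
  with x have s: "x = epoint s" by (simp add: epoint_def)
  obtain k :: int where k: "s - of_int k * (2 * pi) \<in> {a - pi..<a - pi + 2 * pi}"
    using shift_into_interval[of "2 * pi" s "a - pi"] by auto
  have "x = epoint (a + (s - of_int k * (2 * pi) - a))"
    using s minus_of_int[of s k] by simp
  with k show ?thesis using that[of "s - of_int k * (2 * pi) - a"] by auto
qed

lemma refl_line_epoint: "refl_line a (epoint (a + t)) = epoint (a - t)"
proof -
  have "cos (a + t) * cos a + sin (a + t) * sin a = cos t"
    using cos_diff[of "a + t" a] by simp
  then show ?thesis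
    unfolding refl_line_def epoint_def Let_def fst_conv snd_conv
    by (simp add: cos_add cos_diff sin_add sin_diff algebra_simps)
qed

lemma epoint_arc_complement:
  assumes "0 \<le> s"
  shows "{epoint (a + t) | t. s \<le> \<bar>t\<bar> \<and> \<bar>t\<bar> \<le> pi} = {epoint (a + pi + t) | t. \<bar>t\<bar> \<le> pi - s}"
proof -
  interpret periodic_fun_simple epoint "2 * pi" by (fact epoint_periodic)
  have turn: "epoint (a + pi + (t + pi)) = epoint (a + t)" for t
    using plus_period[of "a + t"] by (simp add: algebra_simps)
  have "epoint (a + t) \<in> {epoint (a + pi + t) | t. \<bar>t\<bar> \<le> pi - s}"
    if "s \<le> \<bar>t\<bar>" "\<bar>t\<bar> \<le> pi" for t
  proof (cases "t \<ge> 0")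
    case True
    then have "epoint (a + t) = epoint (a + pi + (t - pi))" "\<bar>t - pi\<bar> \<le> pi - s"
      using that by auto
    then show ?thesis by blast
  next
    case False
    then have "epoint (a + t) = epoint (a + pi + (t + pi))" "\<bar>t + pi\<bar> \<le> pi - s"
      using that turn by auto
    then show ?thesis by blast
  qed
  moreover have "epoint (a + pi + t) \<in> {epoint (a + t) | t. s \<le> \<bar>t\<bar> \<and> \<bar>t\<bar> \<le> pi}"
    if "\<bar>t\<bar> \<le> pi - s" for t
  proof (cases "t \<le> 0")
    case True
    then have "epoint (a + pi + t) = epoint (a + (pi + t))" "s \<le> \<bar>pi + t\<bar> \<and> \<bar>pi + t\<bar> \<le> pi"
      using that assms by (auto simp: add.assoc)
    then show ?thesis by blast
  next
    case False
    then have "epoint (a + pi + t) = epoint (a + (t - pi))" "s \<le> \<bar>t - pi\<bar> \<and> \<bar>t - pi\<bar> \<le> pi"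
      using that turn[of "t - pi"] assms by auto
    then show ?thesis by blast
  qed
  ultimately show ?thesis by blast
qed

lemma circ_level_set:
  assumes "symmetric_about (\<lambda>t. v (epoint t)) a"
  shows "{x \<in> circ. v x = c} = {epoint (a + t) | t. \<bar>t\<bar> \<le> pi \<and> v (epoint (a + \<bar>t\<bar>)) = c}"
proof (intro set_eqI iffI)
  fix x assume x: "x \<in> {x \<in> circ. v x = c}"
  then obtain t where "\<bar>t\<bar> \<le> pi" "x = epoint (a + t)"
    using circ_epoint_near[of x a] by auto
  with x show "x \<in> {epoint (a + t) | t. \<bar>t\<bar> \<le> pi \<and> v (epoint (a + \<bar>t\<bar>)) = c}"
    using symmetric_about_abs[OF assms, of t] by auto
next
  fix x assume "x \<in> {epoint (a + t) | t. \<bar>t\<bar> \<le> pi \<and> v (epoint (a + \<bar>t\<bar>)) = c}"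
  then show "x \<in> {x \<in> circ. v x = c}"
    using symmetric_about_abs[OF assms] epoint_in_circ by auto
qed

lemma circ_image:
  assumes "symmetric_about (\<lambda>t. v (epoint t)) a"
  shows "v ` circ = (\<lambda>s. v (epoint (a + s))) ` {0..pi}"
proof (rule equalityI)
  show "v ` circ \<subseteq> (\<lambda>s. v (epoint (a + s))) ` {0..pi}"
  proof
    fix y assume "y \<in> v ` circ"
    then obtain t where "\<bar>t\<bar> \<le> pi" "y = v (epoint (a + t))"
      using circ_epoint_near[of _ a] by blast
    then show "y \<in> (\<lambda>s. v (epoint (a + s))) ` {0..pi}"
      using symmetric_about_abs[OF assms, of t] by auto
  qed
  show "(\<lambda>s. v (epoint (a + s))) ` {0..pi} \<subseteq> v ` circ"
    using epoint_in_circ by auto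
qed

lemma separable_one_sided:
  assumes "separable v" "a \<in> {0..<2 * pi}"
  shows "right_le_left (\<lambda>t. v (epoint t)) a \<or> left_le_right (\<lambda>t. v (epoint t)) a"
proof -
  have half: "epoint (a + t) \<in> half_circ a" if "0 < t" "t < pi" for t
    using that unfolding half_circ_def by blast
  from assms
  have "(\<forall>x\<in>half_circ a. v (refl_line a x) \<ge> v x) \<or> (\<forall>x\<in>half_circ a. v (refl_line a x) \<le> v x)"
    unfolding separable_def by blast
  then show ?thesis
  proof
    assume le: "\<forall>x\<in>half_circ a. v (refl_line a x) \<ge> v x"
    have "v (epoint (a + t)) \<le> v (epoint (a - t))" if "0 < t" "t < pi" for t
      using bspec[OF le half[OF that]] by (simp add: refl_line_epoint)
    then show ?thesis unfolding right_le_left_def by blast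
  next
    assume ge: "\<forall>x\<in>half_circ a. v (refl_line a x) \<le> v x"
    have "v (epoint (a - t)) \<le> v (epoint (a + t))" if "0 < t" "t < pi" for t
      using bspec[OF ge half[OF that]] by (simp add: refl_line_epoint)
    then show ?thesis unfolding left_le_right_def by blast
  qed
qed

lemma separable_periodic_on_circle:
  assumes "separable v"
  shows "separable_periodic (\<lambda>t. v (epoint t))"
proof -
  let ?f = "\<lambda>t. v (epoint t)"
  have periodic: "periodic_fun_simple ?f (2 * pi)"
    by standard (simp add: epoint_def)
  then interpret periodic_fun_simple ?f "2 * pi" .
  show ?thesis
  proof (intro separable_periodic.intro[OF periodic] separable_periodic_axioms.intro)
    fix a
    obtain k :: int where k: "a - of_int k * (2 * pi) \<in> {0..<0 + 2 * pi}"
      using shift_into_interval[of "2 * pi" a 0] by auto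
    have shift: "(\<lambda>x. ?f (x + of_int k * (2 * pi))) = ?f" by (rule ext) (rule plus_of_int)
    show "right_le_left ?f a \<or> left_le_right ?f a"
      using separable_one_sided[OF assms, of "a - of_int k * (2 * pi)"] k
        right_le_left_translate[of ?f "of_int k * (2 * pi)" "a - of_int k * (2 * pi)"]
        left_le_right_translate[of ?f "of_int k * (2 * pi)" "a - of_int k * (2 * pi)"]
      by (simp add: shift)
  qed
qed

lemma circle_profile_nonconstant:
  fixes v :: "real \<times> real \<Rightarrow> real"
  assumes "(SUP x\<in>circ. v x) > (INF x\<in>circ. v x)"
  shows "\<exists>x y. v (epoint x) \<noteq> v (epoint y)"
proof (rule ccontr)
  assume const: "\<nexists>x y. v (epoint x) \<noteq> v (epoint y)"
  have "v p = v (epoint 0)" if p: "p \<in> circ" for p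
  proof -
    obtain t where "p = epoint (0 + t)" using circ_epoint_near[OF p] by blast
    with const show ?thesis by auto
  qed
  then have "v ` circ = {v (epoint 0)}"
    using epoint_in_circ by blast
  with assms show False by simp
qed

lemma extremal_arcs:
  fixes v :: "real \<times> real \<Rightarrow> real"
  assumes cont: "continuous_on UNIV (\<lambda>t. v (epoint t))"
    and axis: "symmetric_about (\<lambda>t. v (epoint t)) a"
    and anti: "antimono_on {a..a + pi} (\<lambda>t. v (epoint t))"
    and nonconst: "(SUP x\<in>circ. v x) > (INF x\<in>circ. v x)"
  obtains t1 t2 where "t1 \<in> {0..<pi}" "t2 \<in> {0..<pi}" "t1 + t2 < pi"
    "{x\<in>circ. v x = (SUP y\<in>circ. v y)} = {epoint (a + t) | t. \<bar>t\<bar> \<le> t1}"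
    "{x\<in>circ. v x = (INF y\<in>circ. v y)} = {epoint (a + pi + t) | t. \<bar>t\<bar> \<le> t2}"
proof -
  define g where "g = (\<lambda>s. v (epoint (a + s)))"
  have g_cont: "continuous_on {0..pi} g"
    unfolding g_def by (intro continuous_on_compose2[OF cont] continuous_intros) auto
  have g_anti: "antimono_on {0..pi} g"
    using anti unfolding g_def monotone_on_def by auto
  have bounds: "g pi \<le> g s" "g s \<le> g 0" if "s \<in> {0..pi}" for s
    using monotone_onD[OF g_anti, of s pi] monotone_onD[OF g_anti, of 0 s] that by auto
  have image: "v ` circ = g ` {0..pi}"
    unfolding g_def by (rule circ_image[OF axis])
  have sup: "(SUP x\<in>circ. v x) = g 0"
    unfolding image by (rule cSup_eq_maximum) (use bounds in auto)
  have inf: "(INF x\<in>circ. v x) = g pi"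
    unfolding image by (rule cInf_eq_minimum) (use bounds in auto)
  have "g pi < g 0" using nonconst by (simp only: sup inf)
  then obtain t1 s2 where t: "0 \<le> t1" "t1 < s2" "s2 \<le> pi"
    and top: "{s \<in> {0..pi}. g s = g 0} = {0..t1}"
    and bot: "{s \<in> {0..pi}. g s = g pi} = {s2..pi}"
    by (rule antimono_extremal_level_sets[OF pi_ge_zero g_cont g_anti])
  have level: "{x \<in> circ. v x = c} = {epoint (a + t) | t. \<bar>t\<bar> \<le> pi \<and> g \<bar>t\<bar> = c}" for c
    using circ_level_set[OF axis] by (simp add: g_def)
  have "\<bar>t\<bar> \<le> pi \<and> g \<bar>t\<bar> = g 0 \<longleftrightarrow> \<bar>t\<bar> \<le> t1" for t
    using top[unfolded set_eq_iff, rule_format, of "\<bar>t\<bar>"] t by auto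
  then have max_set: "{x \<in> circ. v x = g 0} = {epoint (a + t) | t. \<bar>t\<bar> \<le> t1}"
    by (simp only: level)
  have "\<bar>t\<bar> \<le> pi \<and> g \<bar>t\<bar> = g pi \<longleftrightarrow> s2 \<le> \<bar>t\<bar> \<and> \<bar>t\<bar> \<le> pi" for t
    using bot[unfolded set_eq_iff, rule_format, of "\<bar>t\<bar>"] t by auto
  then have min_set: "{x \<in> circ. v x = g pi} = {epoint (a + pi + t) | t. \<bar>t\<bar> \<le> pi - s2}"
    using epoint_arc_complement[of s2 a] t by (simp only: level)
  show ?thesis
  proof (rule that)
    show "t1 \<in> {0..<pi}" "pi - s2 \<in> {0..<pi}" "t1 + (pi - s2) < pi" using t by auto
    show "{x \<in> circ. v x = (SUP y\<in>circ. v y)} = {epoint (a + t) | t. \<bar>t\<bar> \<le> t1}"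
      using max_set by (simp only: sup)
    show "{x \<in> circ. v x = (INF y\<in>circ. v y)} = {epoint (a + pi + t) | t. \<bar>t\<bar> \<le> pi - s2}"
      using min_set by (simp only: inf)
  qed
qed

theorem lemma2p1:
  fixes v :: "real \<times> real \<Rightarrow> real"
  assumes cont: "continuous_on circ v"
    and pos: "\<forall>x\<in>circ. v x > 0"
    and sep: "separable v"
    and nonconst: "(SUP x\<in>circ. v x) > (INF x\<in>circ. v x)"
  shows "\<exists>a0 t1 t2. a0 \<in> {0..<2*pi} \<and> t1 \<in> {0..<pi} \<and> t2 \<in> {0..<pi} \<and>
    t1 + t2 < pi \<and>
    {x\<in>circ. v x = (SUP y\<in>circ. v y)} = {epoint (a0 + t) | t. \<bar>t\<bar> \<le> t1} \<and>
    {x\<in>circ. v x = (INF y\<in>circ. v y)} = {epoint (a0 + pi + t) | t. \<bar>t\<bar> \<le> t2} \<and>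
    (\<forall>x\<in>half_circ a0. v x = v (refl_line a0 x)) \<and>
    (\<exists>a b. v (epoint a) \<noteq> v (epoint b)) \<and>
    (\<forall>a b. a0 \<le> a \<and> a \<le> b \<and> b < a0 + pi \<longrightarrow> v (epoint b) \<le> v (epoint a))"
proof -
  let ?f = "\<lambda>t. v (epoint t)"
  have cont_f: "continuous_on UNIV ?f" by (rule continuous_on_circle_profile[OF cont])
  have nonconstant: "\<exists>a b. v (epoint a) \<noteq> v (epoint b)"
    by (rule circle_profile_nonconstant[OF nonconst])
  then obtain x y where xy: "?f x \<noteq> ?f y" by blast
  obtain a0 where a0: "a0 \<in> {0..<2 * pi}" "symmetric_about ?f a0"
      "\<forall>\<alpha>\<in>{a0..a0 + pi}. right_le_left ?f \<alpha>"
    using separable_periodic.normalized_decreasing_axis[OF separable_periodic_on_circle[OF sep] cont_f xy] .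
  have anti: "antimono_on {a0..a0 + pi} ?f"
    by (rule antimono_on_if_right_le_left) (use a0(3) in auto)
  obtain t1 t2 where arcs: "t1 \<in> {0..<pi}" "t2 \<in> {0..<pi}" "t1 + t2 < pi"
    "{x\<in>circ. v x = (SUP y\<in>circ. v y)} = {epoint (a0 + t) | t. \<bar>t\<bar> \<le> t1}"
    "{x\<in>circ. v x = (INF y\<in>circ. v y)} = {epoint (a0 + pi + t) | t. \<bar>t\<bar> \<le> t2}"
    using extremal_arcs[OF cont_f a0(2) anti nonconst] .
  have half: "\<forall>x\<in>half_circ a0. v x = v (refl_line a0 x)"
    using a0(2) unfolding half_circ_def symmetric_about_def by (auto simp: refl_line_epoint)
  have mono: "\<forall>a b. a0 \<le> a \<and> a \<le> b \<and> b < a0 + pi \<longrightarrow> v (epoint b) \<le> v (epoint a)"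
    using monotone_onD[OF anti] by auto
  show ?thesis
    by (rule exI[of _ a0], rule exI[of _ t1], rule exI[of _ t2])
      (intro conjI; fact a0(1) arcs half mono nonconstant)
qed

end
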